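(* For every integer $n\ge1$ and real $x$, $$\frac{\mathfrak{C}_n(x)}{n!}=\det\begin{pmatrix} R(1)&1&&&\\ R(2)&R(1)&1&&\\ \vdots&\vdots&\ddots&\ddots&\\ R(n-1)&R(n-2)&\cdots&R(1)&1\\ R(n)&R(n-1)&\cdots&R(2)&R(1) \end{pmatrix},$$ the $n\times n$ lower Hessenberg matrix with entries $R(i-j+1)$ for $i\ge j$, $1$ on the superdiagonal and $0$ elsewhere, where $$R(j)=x\,\frac{(-1)^{j-1}}{j!}\left(\left(\tfrac12\right)^j-\left(-\tfrac12\right)^j\right).$$
   Context: For $n\ge1$ the central factorial is $x^{[n]}=x\,(x+\tfrac n2-1)(x+\tfrac n2-2)\cdots(x-\tfrac n2+1)$ (a product of $n$ factors), and $x^{[0]}=1$. The central factorial numbers of the second kind $T(n,k)$ ($0\le k\le n$) are defined by $x^n=\sum_{k=0}^n T(n,k)\,x^{[k]}$; equivalently $T(n,k)=\frac1{k!}\sum_{j=0}^k(-1)^j\binom kj\left(\frac k2-j\right)^n$, and $T(n,k)=0$ for $k>n$. The $n$th central Fubini-like polynomial is $\mathfrak{C}_n(x)=\sum_{k=0}^n k!\,T(n,k)\,x^k$. *)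

theory Defs
  imports Complex_Main "Jordan_Normal_Form.Determinant"
begin

(* central factorial numbers of the second kind, explicit formula; 0 for k > n *)
definition central_T :: "nat \<Rightarrow> nat \<Rightarrow> real" where
  "central_T n k = (if k > n then 0 else
     (1 / fact k) * (\<Sum>j=0..k. (-1)^j * real (k choose j) * (real k / 2 - real j)^n))"

definition central_fubini :: "nat \<Rightarrow> real \<Rightarrow> real" where
  "central_fubini n x = (\<Sum>k=0..n. fact k * central_T n k * x^k)"

definition R_coef :: "real \<Rightarrow> nat \<Rightarrow> real" where
  "R_coef x j = x * ((-1)^(j-1) / fact j) * ((1/2)^j - (-1/2)^j)"

(* n x n lower Hessenberg matrix, 0-based indices: entry (i,j) = R(i-j+1) for i >= j,
   1 on the superdiagonal (j = i+1), 0 elsewhere *)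
definition hess_mat :: "real \<Rightarrow> nat \<Rightarrow> real mat" where
  "hess_mat x n = mat n n (\<lambda>(i,j). if j \<le> i then R_coef x (i - j + 1)
                                   else if j = i + 1 then 1 else 0)"

end

theory Submission
  imports Defs "HOL-Computational_Algebra.Formal_Power_Series"
begin

text \<open>
  Put \<open>E(t) = exp(t/2) - exp(-t/2)\<close>. The explicit formula for \<open>T(n,k)\<close> is the binomial
  expansion of \<open>E(t)^k\<close>, so \<open>k! T(n,k) / n!\<close> is the \<open>n\<close>-th coefficient of \<open>E(t)^k\<close> and
  \<open>C_n(x) / n!\<close> is the \<open>n\<close>-th coefficient of \<open>1 / (1 - g)\<close> for \<open>g = x E\<close>.
  Since \<open>g(0) = 0\<close>, the coefficients \<open>f_n\<close> of \<open>1 / (1 - g) = 1 + g / (1 - g)\<close> satisfy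
  \<open>f_(m+1) = \<Sum>i\<le>m. g_(i+1) f_(m-i)\<close>. Expanding the Hessenberg determinant along its first
  row gives the same recurrence, because \<open>R(j) = (-1)^(j-1) g_j\<close>.
\<close>

text \<open>The first column \<open>c\<close> is kept free so that the first-row expansion can be proved by
  induction: deleting column \<open>1\<close> shifts \<open>c\<close> but leaves \<open>a\<close> alone.\<close>

definition hessenberg_mat :: "(nat \<Rightarrow> 'a) \<Rightarrow> (nat \<Rightarrow> 'a) \<Rightarrow> nat \<Rightarrow> 'a::comm_ring_1 mat" where
  "hessenberg_mat a c n = mat n n (\<lambda>(i,j).
     if j = 0 then c i else if j \<le> i then a (i - j + 1) else if j = i + 1 then 1 else 0)"

abbreviation toeplitz_hessenberg_mat :: "(nat \<Rightarrow> 'a) \<Rightarrow> nat \<Rightarrow> 'a::comm_ring_1 mat" where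
  "toeplitz_hessenberg_mat a \<equiv> hessenberg_mat a (\<lambda>i. a (Suc i))"

lemma hessenberg_mat_carrier: "hessenberg_mat a c n \<in> carrier_mat n n"
  by (simp add: hessenberg_mat_def)

lemma mat_delete_hessenberg_mat_0_0:
  "mat_delete (hessenberg_mat a c (Suc m)) 0 0 = toeplitz_hessenberg_mat a m"
  by (rule eq_matI) (auto simp: mat_delete_def hessenberg_mat_def)

lemma mat_delete_hessenberg_mat_0_1:
  "mat_delete (hessenberg_mat a c (Suc m)) 0 1 = hessenberg_mat a (\<lambda>i. c (Suc i)) m"
  by (rule eq_matI) (auto simp: mat_delete_def hessenberg_mat_def)

lemma det_hessenberg_mat_1: "det (hessenberg_mat a c 1) = c 0"
proof -
  let ?A = "hessenberg_mat a c 1"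
  have "mat_delete ?A 0 0 \<in> carrier_mat 0 0"
    using mat_delete_carrier[OF hessenberg_mat_carrier, of a c 1 0 0] by simp
  then have "det (mat_delete ?A 0 0) = 1"
    by (rule det_dim_zero)
  moreover have "det ?A = (\<Sum>j<1. ?A $$ (0,j) * cofactor ?A 0 j)"
    by (rule laplace_expansion_row[OF hessenberg_mat_carrier]) simp
  ultimately show ?thesis
    by (simp add: cofactor_def hessenberg_mat_def)
qed

text \<open>In the first row only the entries \<open>c 0\<close> and the superdiagonal \<open>1\<close> are nonzero.\<close>

lemma det_hessenberg_mat_Suc_Suc:
  "det (hessenberg_mat a c (Suc (Suc m))) =
     c 0 * det (toeplitz_hessenberg_mat a (Suc m)) - det (hessenberg_mat a (\<lambda>i. c (Suc i)) (Suc m))"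
proof -
  let ?A = "hessenberg_mat a c (Suc (Suc m))"
  have "det ?A = (\<Sum>j<Suc (Suc m). ?A $$ (0,j) * cofactor ?A 0 j)"
    by (rule laplace_expansion_row[OF hessenberg_mat_carrier]) simp
  also have "\<dots> = ?A $$ (0,0) * cofactor ?A 0 0 + ?A $$ (0,1) * cofactor ?A 0 1
      + (\<Sum>j<m. ?A $$ (0, Suc (Suc j)) * cofactor ?A 0 (Suc (Suc j)))"
    by (simp only: sum.lessThan_Suc_shift) simp
  also have "(\<Sum>j<m. ?A $$ (0, Suc (Suc j)) * cofactor ?A 0 (Suc (Suc j))) = 0"
    by (rule sum.neutral) (auto simp: hessenberg_mat_def)
  moreover have "?A $$ (0,0) = c 0" and "?A $$ (0,1) = 1"
    by (auto simp: hessenberg_mat_def)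
  ultimately show ?thesis
    by (simp add: cofactor_def mat_delete_hessenberg_mat_0_0 mat_delete_hessenberg_mat_0_1
        del: One_nat_def)
qed

lemma det_hessenberg_mat:
  "det (hessenberg_mat a c (Suc m)) =
     (\<Sum>k\<le>m. (-1)^k * c k * det (toeplitz_hessenberg_mat a (m - k)))"
proof (induction m arbitrary: c)
  case 0
  have "det (toeplitz_hessenberg_mat a 0) = 1"
    by (simp add: hessenberg_mat_def)
  then show ?case
    using det_hessenberg_mat_1 by simp
next
  case (Suc m)
  have "det (hessenberg_mat a (\<lambda>i. c (Suc i)) (Suc m)) =
      (\<Sum>k\<le>m. (-1)^k * c (Suc k) * det (toeplitz_hessenberg_mat a (m - k)))"
    by (rule Suc.IH)
  then show ?case
    unfolding det_hessenberg_mat_Suc_Suc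
    by (simp only: sum.atMost_Suc_shift) (simp add: sum_negf[symmetric])
qed

corollary det_toeplitz_hessenberg_mat_Suc:
  "det (toeplitz_hessenberg_mat a (Suc m)) =
     (\<Sum>k\<le>m. (-1)^k * a (Suc k) * det (toeplitz_hessenberg_mat a (m - k)))"
  by (rule det_hessenberg_mat)

lemma fps_nth_sum_powers:
  fixes g :: "'a::comm_ring_1 fps"
  assumes "fps_nth g 0 = 0" and "n \<le> N"
  shows "fps_nth (\<Sum>k\<le>N. g ^ k) n = (\<Sum>k\<le>n. fps_nth (g ^ k) n)"
  unfolding fps_sum_nth
  by (rule sum.mono_neutral_right) (use assms startsby_zero_power_prefix[of g] in auto)

lemma fps_nth_sum_powers_Suc:
  fixes g :: "'a::comm_ring_1 fps"
  assumes g0: "fps_nth g 0 = 0"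
  shows "(\<Sum>k\<le>Suc m. fps_nth (g ^ k) (Suc m)) =
    (\<Sum>i\<le>m. fps_nth g (Suc i) * (\<Sum>k\<le>m - i. fps_nth (g ^ k) (m - i)))"
proof -
  let ?P = "\<Sum>k\<le>m. g ^ k"
  have "(\<Sum>k\<le>Suc m. fps_nth (g ^ k) (Suc m)) = fps_nth (\<Sum>k\<le>Suc m. g ^ k) (Suc m)"
    by (rule fps_nth_sum_powers[OF g0 order.refl, symmetric])
  also have "\<dots> = fps_nth (1 + g * ?P) (Suc m)"
    by (simp only: sum.atMost_Suc_shift power_Suc sum_distrib_left power_0)
  also have "\<dots> = (\<Sum>i=0..Suc m. fps_nth g i * fps_nth ?P (Suc m - i))"
    by (simp add: fps_mult_nth)
  also have "\<dots> = (\<Sum>i\<le>m. fps_nth g (Suc i) * fps_nth ?P (m - i))"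
    by (simp only: sum.atLeast0_atMost_Suc_shift) (simp add: g0 atLeast0AtMost)
  also have "\<dots> = (\<Sum>i\<le>m. fps_nth g (Suc i) * (\<Sum>k\<le>m - i. fps_nth (g ^ k) (m - i)))"
    using fps_nth_sum_powers[OF g0] by simp
  finally show ?thesis .
qed

theorem det_toeplitz_hessenberg_mat_fps:
  fixes g :: "'a::comm_ring_1 fps"
  assumes g0: "fps_nth g 0 = 0"
    and a: "\<And>j. j \<ge> 1 \<Longrightarrow> a j = (-1)^(j - 1) * fps_nth g j"
  shows "det (toeplitz_hessenberg_mat a n) = (\<Sum>k\<le>n. fps_nth (g ^ k) n)"
proof (induction n rule: less_induct)
  case (less n)
  show ?case
  proof (cases n)
    case 0
    then show ?thesis
      by (simp add: hessenberg_mat_def)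
  next
    case (Suc m)
    have "det (toeplitz_hessenberg_mat a n) =
        (\<Sum>k\<le>m. (-1)^k * a (Suc k) * det (toeplitz_hessenberg_mat a (m - k)))"
      unfolding Suc by (rule det_toeplitz_hessenberg_mat_Suc)
    also have "\<dots> = (\<Sum>k\<le>m. fps_nth g (Suc k) * (\<Sum>j\<le>m - k. fps_nth (g ^ j) (m - k)))"
    proof (rule sum.cong[OF refl])
      fix k
      have "(-1)^k * (-1)^k = (1::'a)"
        by (simp flip: power_mult_distrib)
      then have "(-1)^k * a (Suc k) = fps_nth g (Suc k)"
        by (simp add: a mult.assoc[symmetric])
      moreover have "det (toeplitz_hessenberg_mat a (m - k)) = (\<Sum>j\<le>m - k. fps_nth (g ^ j) (m - k))"
        using Suc by (intro less.IH) simp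
      ultimately show "(-1)^k * a (Suc k) * det (toeplitz_hessenberg_mat a (m - k)) =
          fps_nth g (Suc k) * (\<Sum>j\<le>m - k. fps_nth (g ^ j) (m - k))"
        by simp
    qed
    also have "\<dots> = (\<Sum>k\<le>n. fps_nth (g ^ k) n)"
      unfolding Suc by (rule fps_nth_sum_powers_Suc[OF g0, symmetric])
    finally show ?thesis .
  qed
qed

definition central_difference_fps :: "real fps" where
  "central_difference_fps = fps_exp (1/2) - fps_exp (-1/2)"

lemma fps_nth_central_difference_fps:
  "fps_nth central_difference_fps j = ((1/2)^j - (-1/2)^j) / fact j"
  by (simp add: central_difference_fps_def diff_divide_distrib)

lemma central_difference_fps_power:
  "central_difference_fps ^ k =
     (\<Sum>j\<le>k. fps_const ((-1)^j * real (k choose j)) * fps_exp (real k / 2 - real j))"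
proof -
  let ?u = "fps_const (-1) * fps_exp (-1/2 :: real)"
  have summand: "of_nat (k choose j) * ?u ^ j * fps_exp (1/2) ^ (k - j)
      = fps_const ((-1)^j * real (k choose j)) * fps_exp (real k / 2 - real j)" if "j \<le> k" for j
  proof -
    have "fps_exp (-1/2::real) ^ j * fps_exp (1/2) ^ (k - j) = fps_exp (real k / 2 - real j)"
      unfolding fps_exp_power_mult fps_exp_add_mult[symmetric]
      using that by (simp add: of_nat_diff field_simps)
    then show ?thesis
      unfolding power_mult_distrib fps_const_power fps_of_nat fps_const_mult[symmetric]
      by (simp only: ac_simps)
  qed
  have "central_difference_fps ^ k = (?u + fps_exp (1/2)) ^ k"
    by (simp add: central_difference_fps_def fps_const_neg[symmetric] del: fps_const_neg)
  also have "\<dots> = (\<Sum>j\<le>k. of_nat (k choose j) * ?u ^ j * fps_exp (1/2) ^ (k - j))"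
    by (rule binomial_ring)
  also have "\<dots> = (\<Sum>j\<le>k. fps_const ((-1)^j * real (k choose j)) * fps_exp (real k / 2 - real j))"
    by (rule sum.cong[OF refl summand]) simp
  finally show ?thesis .
qed

lemma central_T_fps: "fact k * central_T n k = fact n * fps_nth (central_difference_fps ^ k) n"
proof (cases "k \<le> n")
  case True
  have "fps_nth (central_difference_fps ^ k) n =
      (\<Sum>j\<le>k. (-1)^j * real (k choose j) * (real k / 2 - real j)^n) / fact n"
    unfolding central_difference_fps_power fps_sum_nth fps_mult_left_const_nth fps_exp_nth
    by (simp add: sum_divide_distrib)
  with True show ?thesis
    by (simp add: central_T_def atLeast0AtMost)
next
  case False
  have "fps_nth central_difference_fps 0 = 0"
    by (simp add: central_difference_fps_def)
  with False show ?thesis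
    by (simp add: central_T_def startsby_zero_power_prefix)
qed

lemma central_fubini_fps:
  "central_fubini n x / fact n = (\<Sum>k\<le>n. fps_nth ((fps_const x * central_difference_fps) ^ k) n)"
  unfolding central_fubini_def sum_divide_distrib atLeast0AtMost
proof (rule sum.cong[OF refl])
  fix k
  have "fact k * central_T n k * x ^ k / fact n = x ^ k * fps_nth (central_difference_fps ^ k) n"
    by (simp add: central_T_fps)
  then show "fact k * central_T n k * x ^ k / fact n =
      fps_nth ((fps_const x * central_difference_fps) ^ k) n"
    by (simp add: power_mult_distrib)
qed

lemma R_coef_fps:
  "R_coef x j = (-1)^(j - 1) * fps_nth (fps_const x * central_difference_fps) j"
  by (simp add: R_coef_def fps_nth_central_difference_fps)

lemma hess_mat_toeplitz: "hess_mat x n = toeplitz_hessenberg_mat (R_coef x) n"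
  by (rule eq_matI) (auto simp: hess_mat_def hessenberg_mat_def)

text \<open>The identity holds for \<open>n = 0\<close> as well.\<close>

theorem theorem10:
  fixes n :: nat and x :: real
  assumes "n \<ge> 1"
  shows "central_fubini n x / fact n = det (hess_mat x n)"
proof -
  let ?g = "fps_const x * central_difference_fps"
  have g0: "fps_nth ?g 0 = 0"
    by (simp add: central_difference_fps_def)
  have "central_fubini n x / fact n = (\<Sum>k\<le>n. fps_nth (?g ^ k) n)"
    by (rule central_fubini_fps)
  also have "\<dots> = det (toeplitz_hessenberg_mat (R_coef x) n)"
    by (rule det_toeplitz_hessenberg_mat_fps[OF g0 R_coef_fps, symmetric])
  also have "\<dots> = det (hess_mat x n)"
    by (simp only: hess_mat_toeplitz)
  finally show ?thesis .
qed

end
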